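(* Every uncountable space $X\in\mathsf{CB_0}(\mathbf{\Sigma}^1_1)$ has cardinality of the continuum.
   Context: $\mathcal{N}=\omega^\omega$ is the Baire space. $P\omega$ is the set of all subsets of $\omega$ with the Scott topology, whose basic open sets are $\{A\subseteq\omega\mid F\subseteq A\}$ for finite $F\subseteq\omega$. For a space $Y$, $\mathbf{\Sigma}^1_1(Y)$ is the set of projections $\{y\in Y\mid\exists p\in\mathcal{N}\,(p,y)\in A\}$ of sets $A\subseteq\mathcal{N}\times Y$ whose complement is a countable union of sets $U\setminus V$ with $U,V$ open in $\mathcal{N}\times Y$. $\mathsf{CB_0}(\mathbf{\Sigma}^1_1)$ is the class of spaces homeomorphic to a subspace $S\subseteq P\omega$ with $S\in\mathbf{\Sigma}^1_1(P\omega)$. *)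

theory Defs
  imports "HOL-Analysis.Analysis" "HOL-Library.Equipollence"
begin

definition Baire_space :: "(nat \<Rightarrow> nat) topology" where
  "Baire_space = product_topology (\<lambda>_. discrete_topology (UNIV :: nat set)) UNIV"

text \<open>P omega with the Scott topology: basic opens are the sets of supersets of a finite F.\<close>
definition Pomega :: "nat set topology" where
  "Pomega = topology_generated_by {{A. F \<subseteq> A} | F. finite F}"

definition Sigma11 :: "'a topology \<Rightarrow> 'a set set" where
  "Sigma11 Y = {S. \<exists>A U V.
      A \<subseteq> topspace Baire_space \<times> topspace Y \<and>
      (\<forall>n::nat. openin (prod_topology Baire_space Y) (U n) \<and>
                openin (prod_topology Baire_space Y) (V n)) \<and>
      (topspace Baire_space \<times> topspace Y) - A = (\<Union>n. U n - V n) \<and>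
      S = {y \<in> topspace Y. \<exists>p \<in> topspace Baire_space. (p, y) \<in> A}}"

definition CB0_Sigma11 :: "'a topology \<Rightarrow> bool" where
  "CB0_Sigma11 X \<longleftrightarrow> (\<exists>S. S \<subseteq> topspace Pomega \<and> S \<in> Sigma11 Pomega \<and>
                          X homeomorphic_space subtopology Pomega S)"

end

theory Submission
  imports Defs
begin

text \<open>
  Refine \<open>\<N> \<times> P\<omega>\<close> to the Baire-times-Cantor topology, whose basic clopen cells
  \<open>cell m z\<close> fix the first \<open>m\<close> coordinates of both components: open sets of \<open>\<N> \<times> P\<omega>\<close>
  remain open, and there are only countably many cells. A \<open>\<Sigma>\<^sup>1\<^sub>1\<close> set \<open>S \<subseteq> P\<omega>\<close> is the
  second projection of \<open>A = \<Inter>n. -U\<^sub>n \<union> V\<^sub>n\<close>. If \<open>S\<close> is uncountable, build a Cantor scheme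
  of subsets of \<open>A\<close> with uncountable projections: at stage \<open>n\<close> the current set is made to lie
  in a cell inside \<open>V\<^sub>n\<close> or to avoid \<open>U\<^sub>n\<close>, split into two pieces whose projections differ at
  a fixed coordinate, and each piece is shrunk into a cell of level \<open>n + 1\<close>. Along every
  branch the sets converge to a point of \<open>A\<close>, and distinct branches give distinct
  projections, so \<open>P\<omega>\<close> injects into \<open>S\<close>.
\<close>

type_synonym point = "(nat \<Rightarrow> nat) \<times> nat set"

definition agree :: "nat \<Rightarrow> point \<Rightarrow> point \<Rightarrow> bool" where
  "agree m z w \<longleftrightarrow> (\<forall>i<m. fst z i = fst w i \<and> (i \<in> snd z \<longleftrightarrow> i \<in> snd w))"

definition cell :: "nat \<Rightarrow> point \<Rightarrow> point set" where
  "cell m z = {w. agree m z w}"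

definition cell_open :: "point set \<Rightarrow> bool" where
  "cell_open W \<longleftrightarrow> (\<forall>z\<in>W. \<exists>m. cell m z \<subseteq> W)"

definition coherent :: "nat \<Rightarrow> point set \<Rightarrow> bool" where
  "coherent m R \<longleftrightarrow> (\<forall>z\<in>R. \<forall>w\<in>R. agree m z w)"

lemma agree_refl [simp]: "agree m z z"
  by (simp add: agree_def)

lemma agree_sym: "agree m z w \<Longrightarrow> agree m w z"
  by (auto simp: agree_def)

lemma agree_trans: "agree m z w \<Longrightarrow> agree m w u \<Longrightarrow> agree m z u"
  by (auto simp: agree_def)

lemma agree_mono: "agree m z w \<Longrightarrow> k \<le> m \<Longrightarrow> agree k z w"
  by (auto simp: agree_def)

lemma mem_cell_iff: "w \<in> cell m z \<longleftrightarrow> agree m z w"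
  by (simp add: cell_def)

lemma cell_eq: "agree m z w \<Longrightarrow> cell m z = cell m w"
  unfolding cell_def using agree_sym agree_trans by blast

lemma agree_coordinate:
  "agree m z w \<Longrightarrow> i < m \<Longrightarrow> fst z i = fst w i \<and> (i \<in> snd z \<longleftrightarrow> i \<in> snd w)"
  by (simp add: agree_def)

lemma coherentD: "coherent m R \<Longrightarrow> z \<in> R \<Longrightarrow> w \<in> R \<Longrightarrow> agree m z w"
  by (simp add: coherent_def)

lemma coherent_subset: "coherent m R \<Longrightarrow> R' \<subseteq> R \<Longrightarrow> coherent m R'"
  by (auto simp: coherent_def)

lemma coherent_cell: "coherent m (cell m z)"
  unfolding coherent_def cell_def using agree_sym agree_trans by blast

section \<open>Open sets of the product are cell-open\<close>

lemma openin_Pomega_finitely_determined: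
  assumes "openin Pomega Y" "y \<in> Y"
  shows "\<exists>m. \<forall>y'. (\<forall>i<m. i \<in> y' \<longleftrightarrow> i \<in> y) \<longrightarrow> y' \<in> Y"
proof -
  let ?T = "\<lambda>Y :: nat set set. \<forall>y\<in>Y. \<exists>m. \<forall>y'. (\<forall>i<m. i \<in> y' \<longleftrightarrow> i \<in> y) \<longrightarrow> y' \<in> Y"
  have "istopology ?T"
    unfolding istopology_def
  proof (intro conjI allI impI)
    fix S T assume S: "?T S" and T: "?T T"
    show "?T (S \<inter> T)"
    proof
      fix y assume y: "y \<in> S \<inter> T"
      obtain m1 where "\<forall>y'. (\<forall>i<m1. i \<in> y' \<longleftrightarrow> i \<in> y) \<longrightarrow> y' \<in> S"
        using S y by (elim ballE exE) auto
      moreover obtain m2 where "\<forall>y'. (\<forall>i<m2. i \<in> y' \<longleftrightarrow> i \<in> y) \<longrightarrow> y' \<in> T"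
        using T y by (elim ballE exE) auto
      ultimately show "\<exists>m. \<forall>y'. (\<forall>i<m. i \<in> y' \<longleftrightarrow> i \<in> y) \<longrightarrow> y' \<in> S \<inter> T"
        by (intro exI[of _ "max m1 m2"]) simp
    qed
  next
    fix K assume K: "\<forall>S\<in>K. ?T S"
    show "?T (\<Union>K)"
    proof
      fix y assume "y \<in> \<Union>K"
      then obtain S where "S \<in> K" "y \<in> S"
        by blast
      then obtain m where "\<forall>y'. (\<forall>i<m. i \<in> y' \<longleftrightarrow> i \<in> y) \<longrightarrow> y' \<in> S"
        using K by (elim ballE exE) auto
      then show "\<exists>m. \<forall>y'. (\<forall>i<m. i \<in> y' \<longleftrightarrow> i \<in> y) \<longrightarrow> y' \<in> \<Union>K"
        using \<open>S \<in> K\<close> by blast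
    qed
  qed
  moreover have "?T S" if basic: "S \<in> {{A. F \<subseteq> A} | F. finite F}" for S
  proof -
    obtain F where "finite F" "S = {A. F \<subseteq> A}"
      using basic by blast
    moreover obtain m where "F \<subseteq> {..<m}"
      using \<open>finite F\<close> finite_nat_bounded by blast
    ultimately show ?thesis
      by (intro ballI exI[of _ m]) auto
  qed
  moreover have "generate_topology_on {{A. F \<subseteq> A} | F. finite F} Y"
    using assms(1) unfolding Pomega_def openin_topology_generated_by_iff .
  ultimately have "?T Y"
    by (rule generate_topology_on_coarsest)
  then show ?thesis
    using assms(2) by (elim ballE) auto
qed

lemma openin_Baire_finitely_determined:
  assumes "openin Baire_space P" "p \<in> P"
  shows "\<exists>m. \<forall>p'. (\<forall>i<m. p' i = p i) \<longrightarrow> p' \<in> P"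
proof -
  obtain W where W: "finite {i. W i \<noteq> UNIV}" "p \<in> Pi\<^sub>E UNIV W" "Pi\<^sub>E UNIV W \<subseteq> P"
    using assms unfolding Baire_space_def openin_product_topology_alt by auto
  obtain m where m: "{i. W i \<noteq> UNIV} \<subseteq> {..<m}"
    using W(1) finite_nat_bounded by blast
  have "p' \<in> P" if "\<forall>i<m. p' i = p i" for p'
  proof -
    have "p' i \<in> W i" for i
      using that m W(2) by (cases "W i = UNIV") (auto simp: PiE_iff)
    then show ?thesis
      using W(3) by (auto simp: PiE_iff)
  qed
  then show ?thesis by blast
qed

lemma openin_Baire_Pomega_imp_cell_open:
  assumes "openin (prod_topology Baire_space Pomega) W"
  shows "cell_open W"
  unfolding cell_open_def
proof
  fix z assume "z \<in> W"
  then obtain P Y where PY: "openin Baire_space P" "openin Pomega Y" "fst z \<in> P" "snd z \<in> Y"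
    "P \<times> Y \<subseteq> W"
    using assms unfolding openin_prod_topology_alt by (metis prod.collapse)
  obtain m1 where m1: "\<forall>p'. (\<forall>i<m1. p' i = fst z i) \<longrightarrow> p' \<in> P"
    using openin_Baire_finitely_determined[OF PY(1,3)] by blast
  obtain m2 where m2: "\<forall>y'. (\<forall>i<m2. i \<in> y' \<longleftrightarrow> i \<in> snd z) \<longrightarrow> y' \<in> Y"
    using openin_Pomega_finitely_determined[OF PY(2,4)] by blast
  have "w \<in> P \<times> Y" if "agree (max m1 m2) z w" for w
  proof -
    have "agree m1 z w" "agree m2 z w"
      using that agree_mono by fastforce+
    then show ?thesis
      using m1 m2 unfolding agree_def by (auto simp: mem_Times_iff)
  qed
  then show "\<exists>m. cell m z \<subseteq> W"
    using PY(5) by (intro exI[of _ "max m1 m2"]) (auto simp: cell_def)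
qed

lemma cell_open_covered_by_cells:
  assumes "cell_open W"
  shows "W \<subseteq> \<Union>{C \<in> (\<Union>m. range (cell m)). C \<subseteq> W}"
proof
  fix z assume "z \<in> W"
  then obtain m where "cell m z \<subseteq> W"
    using assms unfolding cell_open_def by blast
  moreover have "z \<in> cell m z"
    by (simp add: mem_cell_iff)
  ultimately show "z \<in> \<Union>{C \<in> (\<Union>m. range (cell m)). C \<subseteq> W}"
    by blast
qed

section \<open>Counting arguments\<close>

lemma countable_cells: "countable (range (cell m))"
proof -
  define g :: "nat list \<times> nat set \<Rightarrow> point" where
    "g = (\<lambda>(xs, F). (\<lambda>i. if i < m then xs ! i else 0, F))"
  have "countable ((UNIV :: nat list set) \<times> {F :: nat set. finite F})"
    by (auto intro: countable_SIGMA simp: countable_Collect_finite)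
  then have "countable (cell m ` g ` (UNIV \<times> {F. finite F}))"
    by (intro countable_image)
  moreover have "cell m z = cell m (g (map (fst z) [0..<m], snd z \<inter> {..<m}))" for z
    by (rule cell_eq) (auto simp: agree_def g_def)
  then have "range (cell m) \<subseteq> cell m ` g ` (UNIV \<times> {F. finite F})"
    by blast
  ultimately show ?thesis
    by (rule countable_subset[rotated])
qed

lemma uncountable_image_Int_member:
  assumes "uncountable (f ` W)" "W \<subseteq> \<Union>\<C>" "countable \<C>"
  obtains C where "C \<in> \<C>" "uncountable (f ` (W \<inter> C))"
proof -
  have "f ` W \<subseteq> (\<Union>C\<in>\<C>. f ` (W \<inter> C))"
    using assms(2) by blast
  then show ?thesis
    using that assms(1,3) by (meson countable_UN countable_subset)
qed

text \<open>Otherwise every \<open>y \<in> Y\<close> but the majority set \<open>y\<^sub>0\<close> lies in one of countably many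
  countable exceptional sets.\<close>

lemma uncountable_set_family_splits:
  fixes Y :: "nat set set"
  assumes "uncountable Y"
  obtains i where "uncountable {y\<in>Y. i \<in> y}" "uncountable {y\<in>Y. i \<notin> y}"
proof (rule ccontr)
  assume no_split: "\<not> thesis"
  define y\<^sub>0 where "y\<^sub>0 = {i. countable {y\<in>Y. i \<notin> y}}"
  have "countable {y\<in>Y. (i \<in> y) \<noteq> (i \<in> y\<^sub>0)}" for i
    using no_split that by (cases "i \<in> y\<^sub>0") (auto simp: y\<^sub>0_def)
  then have "countable (insert y\<^sub>0 (\<Union>i. {y\<in>Y. (i \<in> y) \<noteq> (i \<in> y\<^sub>0)}))"
    by auto
  moreover have "Y \<subseteq> insert y\<^sub>0 (\<Union>i. {y\<in>Y. (i \<in> y) \<noteq> (i \<in> y\<^sub>0)})"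
    by blast
  ultimately show False
    using assms countable_subset by blast
qed

lemma exists_coherent_subset:
  assumes "uncountable (snd ` R)"
  obtains R' where "R' \<subseteq> R" "uncountable (snd ` R')" "coherent m R'"
proof -
  have "z \<in> cell m z" for z
    by (simp add: mem_cell_iff)
  then have "R \<subseteq> \<Union>(range (cell m))"
    by blast
  then obtain C where "C \<in> range (cell m)" "uncountable (snd ` (R \<inter> C))"
    by (rule uncountable_image_Int_member[OF assms _ countable_cells])
  then obtain c where "uncountable (snd ` (R \<inter> cell m c))"
    by blast
  moreover have "coherent m (R \<inter> cell m c)"
    using coherent_subset[OF coherent_cell] by blast
  ultimately show ?thesis
    using that[of "R \<inter> cell m c"] by blast
qed

lemma exists_splitting_coordinate:
  fixes R :: "('a \<times> nat set) set"
  assumes "uncountable (snd ` R)"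
  obtains i where "uncountable (snd ` {z\<in>R. i \<in> snd z})" "uncountable (snd ` {z\<in>R. i \<notin> snd z})"
proof -
  obtain i where "uncountable {y\<in>snd ` R. i \<in> y}" "uncountable {y\<in>snd ` R. i \<notin> y}"
    by (rule uncountable_set_family_splits[OF assms])
  moreover have "snd ` {z\<in>R. i \<in> snd z} = {y\<in>snd ` R. i \<in> y}"
    and "snd ` {z\<in>R. i \<notin> snd z} = {y\<in>snd ` R. i \<notin> y}"
    by auto
  ultimately show ?thesis
    using that[of i] by simp
qed

section \<open>The Cantor scheme\<close>

locale Cantor_scheme =
  fixes U V :: "nat \<Rightarrow> point set" and A :: "point set"
  assumes cell_open_U: "cell_open (U n)" and cell_open_V: "cell_open (V n)"
    and A_eq: "A = - (\<Union>n. U n - V n)"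
    and uncountable_projection: "uncountable (snd ` A)"
begin

text \<open>A whole cell, not just \<open>R\<close>, has to lie in \<open>V n\<close>: the limit of the scheme is only known
  to lie in the closure of each stage.\<close>

definition decided :: "nat \<Rightarrow> point set \<Rightarrow> bool" where
  "decided n R \<longleftrightarrow> (\<exists>m c. R \<subseteq> cell m c \<and> cell m c \<subseteq> V n) \<or> R \<inter> U n = {}"

definition admissible :: "nat \<Rightarrow> point set \<Rightarrow> point set \<Rightarrow> bool" where
  "admissible n R R' \<longleftrightarrow> R' \<subseteq> R \<and> uncountable (snd ` R') \<and> coherent (Suc n) R' \<and> decided n R'"

lemma decided_subset: "decided n R \<Longrightarrow> R' \<subseteq> R \<Longrightarrow> decided n R'"
  unfolding decided_def by blast

lemma exists_decided_subset:
  assumes "R \<subseteq> A" "uncountable (snd ` R)"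
  obtains R' where "R' \<subseteq> R" "uncountable (snd ` R')" "decided n R'"
proof (cases "countable (snd ` (R \<inter> V n))")
  case True
  have "snd ` R \<subseteq> snd ` (R \<inter> V n) \<union> snd ` (R - V n)"
    by blast
  then have "uncountable (snd ` (R - V n))"
    using True assms(2) by (metis countable_Un countable_subset)
  moreover have "(R - V n) \<inter> U n = {}"
    using assms(1) A_eq by blast
  then have "decided n (R - V n)"
    unfolding decided_def by blast
  ultimately show ?thesis
    using that[of "R - V n"] by blast
next
  case False
  let ?\<C> = "{C \<in> (\<Union>m. range (cell m)). C \<subseteq> V n}"
  have "R \<inter> V n \<subseteq> \<Union>?\<C>"
    using cell_open_covered_by_cells[OF cell_open_V] by blast
  moreover have "countable ?\<C>"
  proof (rule countable_subset)
    show "countable (\<Union>m. range (cell m))"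
      by (intro countable_UN countable_cells) simp
  qed blast
  ultimately obtain C where "C \<in> ?\<C>" "uncountable (snd ` (R \<inter> V n \<inter> C))"
    by (rule uncountable_image_Int_member[OF False])
  moreover from \<open>C \<in> ?\<C>\<close> obtain m where "C \<in> range (cell m)" "C \<subseteq> V n"
    by blast
  then have "decided n (R \<inter> V n \<inter> C)"
    unfolding decided_def by auto
  ultimately show ?thesis
    using that[of "R \<inter> V n \<inter> C"] by blast
qed

lemma exists_children:
  assumes "R \<subseteq> A" "uncountable (snd ` R)"
  shows "\<exists>C i. \<forall>b. admissible n R (C b) \<and> (\<forall>z\<in>C b. i \<in> snd z \<longleftrightarrow> b)"
proof -
  obtain R' where R': "R' \<subseteq> R" "uncountable (snd ` R')" "decided n R'"
    using exists_decided_subset[OF assms] .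
  obtain i where i: "\<And>b. uncountable (snd ` {z\<in>R'. i \<in> snd z \<longleftrightarrow> b})"
  proof -
    obtain i where "uncountable (snd ` {z\<in>R'. i \<in> snd z})" "uncountable (snd ` {z\<in>R'. i \<notin> snd z})"
      using exists_splitting_coordinate[OF R'(2)] .
    then have "uncountable (snd ` {z\<in>R'. i \<in> snd z \<longleftrightarrow> b})" for b
      by (cases b) simp_all
    then show thesis
      using that by blast
  qed
  have "\<exists>C. C \<subseteq> {z\<in>R'. i \<in> snd z \<longleftrightarrow> b} \<and> uncountable (snd ` C) \<and> coherent (Suc n) C" for b
    by (rule exists_coherent_subset[OF i[of b]]) blast
  then obtain C where C: "\<forall>b. C b \<subseteq> {z\<in>R'. i \<in> snd z \<longleftrightarrow> b} \<and> uncountable (snd ` C b) \<and>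
      coherent (Suc n) (C b)"
    using choice[of "\<lambda>b C. C \<subseteq> {z\<in>R'. i \<in> snd z \<longleftrightarrow> b} \<and> uncountable (snd ` C) \<and> coherent (Suc n) C"]
    by blast
  have "admissible n R (C b) \<and> (\<forall>z\<in>C b. i \<in> snd z \<longleftrightarrow> b)" for b
  proof -
    have sub: "C b \<subseteq> {z\<in>R'. i \<in> snd z \<longleftrightarrow> b}"
      using C by blast
    then have "C b \<subseteq> R" and "decided n (C b)"
      using R'(1) decided_subset[OF R'(3)] by auto
    then show ?thesis
      using C sub unfolding admissible_def by auto
  qed
  then show ?thesis
    by blast
qed

definition children :: "nat \<Rightarrow> point set \<Rightarrow> bool \<Rightarrow> point set" where
  "children n R = (SOME C. \<exists>i. \<forall>b. admissible n R (C b) \<and> (\<forall>z\<in>C b. i \<in> snd z \<longleftrightarrow> b))"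

lemma children_spec:
  assumes "R \<subseteq> A" "uncountable (snd ` R)"
  shows "\<exists>i. \<forall>b. admissible n R (children n R b) \<and> (\<forall>z\<in>children n R b. i \<in> snd z \<longleftrightarrow> b)"
  unfolding children_def by (rule someI_ex[OF exists_children[OF assms]])

lemma children_admissible:
  assumes "R \<subseteq> A" "uncountable (snd ` R)"
  shows "admissible n R (children n R b)"
proof -
  obtain i where "\<forall>b. admissible n R (children n R b) \<and> (\<forall>z\<in>children n R b. i \<in> snd z \<longleftrightarrow> b)"
    using children_spec[OF assms] ..
  then show ?thesis
    by simp
qed

primrec stage :: "(nat \<Rightarrow> bool) \<Rightarrow> nat \<Rightarrow> point set" where
  "stage \<alpha> 0 = A"
| "stage \<alpha> (Suc n) = children n (stage \<alpha> n) (\<alpha> n)"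

lemma stage_good: "stage \<alpha> n \<subseteq> A \<and> uncountable (snd ` stage \<alpha> n)"
proof (induction n)
  case (Suc n)
  then have "admissible n (stage \<alpha> n) (stage \<alpha> (Suc n))"
    by (simp add: children_admissible)
  then have "stage \<alpha> (Suc n) \<subseteq> stage \<alpha> n" "uncountable (snd ` stage \<alpha> (Suc n))"
    unfolding admissible_def by simp_all
  then show ?case
    using Suc.IH order_trans[of "stage \<alpha> (Suc n)" "stage \<alpha> n" A] by simp
qed (simp add: uncountable_projection)

lemma stage_Suc_admissible: "admissible n (stage \<alpha> n) (stage \<alpha> (Suc n))"
  using stage_good by (simp add: children_admissible)

lemma stage_coherent: "coherent n (stage \<alpha> n)"
proof (cases n)
  case 0
  then show ?thesis
    by (simp add: coherent_def agree_def)
next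
  case (Suc k)
  then show ?thesis
    using stage_Suc_admissible[of k \<alpha>] unfolding admissible_def by simp
qed

lemma stage_nonempty: "\<exists>z. z \<in> stage \<alpha> n"
proof -
  have "stage \<alpha> n \<noteq> {}"
    using stage_good[of \<alpha> n] by (metis countable_empty image_empty)
  then show ?thesis
    by blast
qed

lemma stage_antimono: "n \<le> N \<Longrightarrow> stage \<alpha> N \<subseteq> stage \<alpha> n"
proof (induction N rule: dec_induct)
  case (step N)
  have "stage \<alpha> (Suc N) \<subseteq> stage \<alpha> N"
    using stage_Suc_admissible[of N \<alpha>] by (simp add: admissible_def)
  then show ?case
    using step.IH by (rule order_trans)
qed simp

lemma stage_cong: "(\<And>i. i < n \<Longrightarrow> \<alpha> i = \<beta> i) \<Longrightarrow> stage \<alpha> n = stage \<beta> n"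
proof (induction n)
  case (Suc n)
  have "stage \<alpha> n = stage \<beta> n"
    using Suc.prems by (intro Suc.IH) simp
  moreover have "\<alpha> n = \<beta> n"
    using Suc.prems by simp
  ultimately show ?case
    by simp
qed simp

definition limit :: "(nat \<Rightarrow> bool) \<Rightarrow> point" where
  "limit \<alpha> = (let pick = \<lambda>i. SOME z. z \<in> stage \<alpha> (Suc i)
              in (\<lambda>i. fst (pick i) i, {i. i \<in> snd (pick i)}))"

lemma limit_agree:
  assumes z: "z \<in> stage \<alpha> N"
  shows "agree N (limit \<alpha>) z"
  unfolding agree_def
proof (intro allI impI)
  fix i assume "i < N"
  define w where "w = (SOME z. z \<in> stage \<alpha> (Suc i))"
  have w: "w \<in> stage \<alpha> (Suc i)"
    unfolding w_def using stage_nonempty by (rule someI_ex)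
  have "Suc i \<le> N"
    using \<open>i < N\<close> by simp
  then have "z \<in> stage \<alpha> (Suc i)"
    using stage_antimono z by blast
  with w have "agree (Suc i) w z"
    by (rule coherentD[OF stage_coherent])
  then have "fst w i = fst z i \<and> (i \<in> snd w \<longleftrightarrow> i \<in> snd z)"
    by (rule agree_coordinate) simp
  then show "fst (limit \<alpha>) i = fst z i \<and> (i \<in> snd (limit \<alpha>) \<longleftrightarrow> i \<in> snd z)"
    by (simp add: limit_def Let_def w_def[symmetric] del: stage.simps)
qed

lemma limit_approx:
  obtains z where "z \<in> stage \<alpha> N" "agree M (limit \<alpha>) z"
proof -
  obtain z where z: "z \<in> stage \<alpha> (max N M)"
    using stage_nonempty ..
  show thesis
  proof
    show "z \<in> stage \<alpha> N"
      using stage_antimono[of N "max N M"] z by auto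
    show "agree M (limit \<alpha>) z"
      using agree_mono[OF limit_agree[OF z]] by simp
  qed
qed

lemma limit_in_A: "limit \<alpha> \<in> A"
proof -
  have "limit \<alpha> \<notin> U n - V n" for n
  proof -
    have "decided n (stage \<alpha> (Suc n))"
      using stage_Suc_admissible[of n \<alpha>] by (simp add: admissible_def)
    then consider m c where "stage \<alpha> (Suc n) \<subseteq> cell m c" "cell m c \<subseteq> V n"
      | "stage \<alpha> (Suc n) \<inter> U n = {}"
      unfolding decided_def by blast
    then show ?thesis
    proof cases
      case 1
      obtain z where z: "z \<in> stage \<alpha> (Suc n)" "agree m (limit \<alpha>) z"
        by (rule limit_approx)
      from z(1) 1(1) have "agree m c z"
        by (auto simp: mem_cell_iff)
      then have "agree m c (limit \<alpha>)"
        using agree_sym[OF z(2)] by (rule agree_trans)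
      then show ?thesis
        using 1(2) by (auto simp: mem_cell_iff)
    next
      case 2
      have "limit \<alpha> \<notin> U n"
      proof
        assume "limit \<alpha> \<in> U n"
        then obtain M where M: "cell M (limit \<alpha>) \<subseteq> U n"
          using cell_open_U[of n] unfolding cell_open_def by blast
        obtain z where "z \<in> stage \<alpha> (Suc n)" "agree M (limit \<alpha>) z"
          by (rule limit_approx)
        with M have "z \<in> stage \<alpha> (Suc n) \<inter> U n"
          by (auto simp: mem_cell_iff)
        with 2 show False
          by simp
      qed
      then show ?thesis
        by simp
    qed
  qed
  then show ?thesis
    unfolding A_eq by blast
qed

lemma limit_projection_inj:
  assumes "\<alpha> \<noteq> \<beta>"
  shows "snd (limit \<alpha>) \<noteq> snd (limit \<beta>)"
proof -
  define n where "n = (LEAST n. \<alpha> n \<noteq> \<beta> n)"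
  have "\<exists>n. \<alpha> n \<noteq> \<beta> n"
    using assms by (simp add: fun_eq_iff)
  then have n: "\<alpha> n \<noteq> \<beta> n"
    unfolding n_def by (rule LeastI_ex)
  have "\<alpha> k = \<beta> k" if "k < n" for k
    using not_less_Least[OF that[unfolded n_def]] by simp
  then have same_stage: "stage \<alpha> n = stage \<beta> n"
    by (rule stage_cong)
  obtain i where i: "\<forall>b. admissible n (stage \<alpha> n) (children n (stage \<alpha> n) b) \<and>
      (\<forall>z\<in>children n (stage \<alpha> n) b. i \<in> snd z \<longleftrightarrow> b)"
    using children_spec[OF conjunct1[OF stage_good] conjunct2[OF stage_good]] ..
  have separated: "i \<in> snd (limit \<gamma>) \<longleftrightarrow> \<gamma> n" if "stage \<gamma> n = stage \<alpha> n" for \<gamma>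
  proof -
    obtain z where z: "z \<in> stage \<gamma> (Suc (max n i))"
      using stage_nonempty ..
    moreover have "stage \<gamma> (Suc (max n i)) \<subseteq> stage \<gamma> (Suc n)"
      by (rule stage_antimono) simp
    ultimately have "z \<in> stage \<gamma> (Suc n)"
      by blast
    then have "z \<in> children n (stage \<alpha> n) (\<gamma> n)"
      using that by simp
    then have "i \<in> snd z \<longleftrightarrow> \<gamma> n"
      using i by blast
    moreover have "i \<in> snd (limit \<gamma>) \<longleftrightarrow> i \<in> snd z"
      using agree_coordinate[OF limit_agree[OF z]] by simp
    ultimately show ?thesis
      by simp
  qed
  have "i \<in> snd (limit \<alpha>) \<longleftrightarrow> \<alpha> n" "i \<in> snd (limit \<beta>) \<longleftrightarrow> \<beta> n"
    using separated same_stage by simp_all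
  then show ?thesis
    using n by auto
qed

lemma Cantor_space_lepoll_projection: "(UNIV :: nat set set) \<lesssim> snd ` A"
proof -
  have "inj (\<lambda>S. snd (limit (\<lambda>i. i \<in> S)))"
  proof (rule injI)
    fix S T :: "nat set"
    assume eq: "snd (limit (\<lambda>i. i \<in> S)) = snd (limit (\<lambda>i. i \<in> T))"
    show "S = T"
    proof (rule ccontr)
      assume "S \<noteq> T"
      then have "(\<lambda>i. i \<in> S) \<noteq> (\<lambda>i. i \<in> T)"
        by (simp add: fun_eq_iff set_eq_iff)
      with eq show False
        using limit_projection_inj by blast
    qed
  qed
  moreover have "range (\<lambda>S. snd (limit (\<lambda>i. i \<in> S))) \<subseteq> snd ` A"
    by (intro image_subsetI imageI limit_in_A)
  ultimately show ?thesis
    unfolding lepoll_def by blast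
qed

end

lemma topspace_Baire_space [simp]: "topspace Baire_space = UNIV"
  unfolding Baire_space_def by (simp add: PiE_UNIV_domain)

lemma topspace_Pomega [simp]: "topspace Pomega = UNIV"
proof -
  have "UNIV \<in> {{A. F \<subseteq> A} | F :: nat set. finite F}"
    by (rule CollectI, rule exI[of _ "{}"]) simp
  then show ?thesis
    unfolding Pomega_def topology_generated_by_topspace by blast
qed

lemma Sigma11_Pomega_eqpoll_reals:
  assumes "S \<in> Sigma11 Pomega" "uncountable S"
  shows "S \<approx> (UNIV :: real set)"
proof -
  obtain A U V where opens: "\<forall>n :: nat. openin (prod_topology Baire_space Pomega) (U n) \<and>
        openin (prod_topology Baire_space Pomega) (V n)"
    and A: "topspace Baire_space \<times> topspace Pomega - A = (\<Union>n. U n - V n)"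
    and S: "S = {y \<in> topspace Pomega. \<exists>p \<in> topspace Baire_space. (p, y) \<in> A}"
    using assms(1) unfolding Sigma11_def by blast
  have "S = snd ` A"
    unfolding S by force
  interpret Cantor_scheme U V A
  proof
    show "cell_open (U n)" "cell_open (V n)" for n
      using opens openin_Baire_Pomega_imp_cell_open by blast+
    show "A = - (\<Union>n. U n - V n)"
      using A by auto
    show "uncountable (snd ` A)"
      using assms(2) \<open>S = snd ` A\<close> by simp
  qed
  have "S \<approx> (UNIV :: nat set set)"
    using lepoll_antisym[OF subset_imp_lepoll[OF subset_UNIV] Cantor_space_lepoll_projection]
      \<open>S = snd ` A\<close> by simp
  then show ?thesis
    using nat_sets_eqpoll_reals by (rule eqpoll_trans)
qed

theorem proposition3p5:
  fixes X :: "'a topology"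
  assumes "CB0_Sigma11 X"
    and "uncountable (topspace X)"
  shows "topspace X \<approx> (UNIV :: real set)"
proof -
  obtain S f where S: "S \<in> Sigma11 Pomega" and f: "homeomorphic_map X (subtopology Pomega S) f"
    using assms(1) unfolding CB0_Sigma11_def homeomorphic_space by blast
  have "f ` topspace X = S" "inj_on f (topspace X)"
    using homeomorphic_imp_surjective_map[OF f] homeomorphic_imp_injective_map[OF f] by simp_all
  then have "topspace X \<approx> S"
    unfolding eqpoll_def bij_betw_def by blast
  moreover have "uncountable S"
    using assms(2) \<open>f ` topspace X = S\<close> \<open>inj_on f (topspace X)\<close> countable_image_inj_on by blast
  then have "S \<approx> (UNIV :: real set)"
    by (rule Sigma11_Pomega_eqpoll_reals[OF S])
  ultimately show ?thesis
    by (rule eqpoll_trans)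
qed

end
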